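(* Let $d\ge2$, $L\in(0,\infty)$ and let $\Gamma$ be the image of $r\in C^1([0,L],\mathbb R^d)$ with $|r'(s)|=1$ on $[0,L]$, where $\Gamma$ is simple in the sense that $r(s_1)=r(s_2)$ with $s_1<s_2$ may hold only if $s_1=0$ and $s_2=L$, and if $r(0)=r(L)$ then $r'(0)=r'(L)$. Let $w\in H^1(\Gamma)$, identified with its continuous representative, and set $w_0=\min_\Gamma w$, $w_1=\max_\Gamma w$, $\tilde\Gamma=\{\mathbf x\in\Gamma: w_0<w(\mathbf x)<w_1\}$. Then $$\int_{\tilde\Gamma}\big(w(r(s))-w_0\big)^2\,ds\le|\tilde\Gamma|^2\int_{\tilde\Gamma}|\nabla_\tau w(r(s))|^2\,ds,$$ where $|\tilde\Gamma|$ is the one-dimensional Hausdorff measure of $\tilde\Gamma$.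
   Context: $H^1(\Gamma)$ is the space of functions $w$ on $\Gamma$ with $w\circ r\in H^1((0,L))$; $\nabla_\tau w(r(s))=\frac{d}{ds}w(r(s))$; integrals over $\tilde\Gamma$ with respect to $ds$ are over the set of parameters $s$ with $r(s)\in\tilde\Gamma$. *)

theory Defs
  imports "HOL-Analysis.Analysis"
begin

definition hausdorff1_pre :: "real \<Rightarrow> 'a::euclidean_space set \<Rightarrow> ennreal" where
  "hausdorff1_pre \<delta> A =
     (INF C \<in> {C :: nat \<Rightarrow> 'a set. A \<subseteq> (\<Union>i. C i) \<and> (\<forall>i. bounded (C i) \<and> diameter (C i) \<le> \<delta>)}.
        (\<Sum>i. ennreal (diameter (C i))))"

definition hausdorff1 :: "'a::euclidean_space set \<Rightarrow> ennreal" where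
  "hausdorff1 A = (SUP \<delta> \<in> {0<..}. hausdorff1_pre \<delta> A)"

definition test_fun :: "real \<Rightarrow> real \<Rightarrow> (real \<Rightarrow> real) \<Rightarrow> bool" where
  "test_fun a b \<phi> \<longleftrightarrow>
     (\<forall>n. ((deriv ^^ n) \<phi>) differentiable_on UNIV) \<and>
     (\<exists>K. compact K \<and> K \<subseteq> {a<..<b} \<and> (\<forall>x. x \<notin> K \<longrightarrow> \<phi> x = 0))"

definition H1_weak_deriv :: "real \<Rightarrow> real \<Rightarrow> (real \<Rightarrow> real) \<Rightarrow> (real \<Rightarrow> real) \<Rightarrow> bool" where
  "H1_weak_deriv a b u g \<longleftrightarrow>
     u absolutely_integrable_on {a<..<b} \<and> (\<lambda>x. (u x)\<^sup>2) integrable_on {a<..<b} \<and>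
     g absolutely_integrable_on {a<..<b} \<and> (\<lambda>x. (g x)\<^sup>2) integrable_on {a<..<b} \<and>
     (\<forall>\<phi>. test_fun a b \<phi> \<longrightarrow>
        integral {a<..<b} (\<lambda>x. u x * deriv \<phi> x) = - integral {a<..<b} (\<lambda>x. g x * \<phi> x))"

end

theory Submission
  imports Defs "HOL-Computational_Algebra.Polynomial"
begin

text \<open>
  Write \<open>u = w \<circ> r\<close> and let \<open>S\<close> be the set of parameters where \<open>w0 < u < w1\<close>.
  From any \<open>s \<in> S\<close>, walking towards a minimiser of \<open>u\<close> one finds an interval
  \<open>(\<alpha>, \<beta>) \<subseteq> S\<close> across which \<open>u\<close> drops by at least \<open>u s - w0\<close>. The fundamental
  theorem of calculus for the weak derivative \<open>g\<close> (obtained by testing the weak identity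
  against smooth plateau functions) then gives \<open>u s - w0 \<le> \<integral>\<^sub>S |g|\<close>, and Cauchy-Schwarz gives
  \<open>(\<integral>\<^sub>S |g|)\<^sup>2 \<le> |S| \<integral>\<^sub>S g\<^sup>2\<close>; integrating over \<open>S\<close> yields
  \<open>\<integral>\<^sub>S (u - w0)\<^sup>2 \<le> |S|\<^sup>2 \<integral>\<^sub>S g\<^sup>2\<close>. Finally \<open>|S| \<le> H\<^sup>1(r S)\<close>: a unit-speed \<open>C\<^sup>1\<close>
  curve that is injective up to its endpoints is locally almost an isometry, so for every
  \<open>c > 1\<close> a set of small diameter \<open>D\<close> has its preimage in two parameter intervals of total
  length at most \<open>c D\<close>.
\<close>

section \<open>Smooth plateau test functions\<close>

primrec differentiable_upto :: "nat \<Rightarrow> (real \<Rightarrow> real) \<Rightarrow> bool" where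
  "differentiable_upto 0 f \<longleftrightarrow> (\<forall>x. f differentiable (at x))"
| "differentiable_upto (Suc n) f \<longleftrightarrow> (\<forall>x. f differentiable (at x)) \<and> differentiable_upto n (deriv f)"

lemma differentiable_upto_Suc_imp: "differentiable_upto (Suc n) f \<Longrightarrow> differentiable_upto n f"
  by (induction n arbitrary: f) auto

lemma differentiable_upto_higher_deriv:
  "differentiable_upto n f \<Longrightarrow> k \<le> n \<Longrightarrow> (deriv ^^ k) f differentiable (at x)"
proof (induction n arbitrary: f k)
  case 0
  then show ?case by simp
next
  case (Suc n)
  then show ?case
    by (cases k) (auto simp: funpow_Suc_right simp del: funpow.simps(2))
qed

lemma deriv_eqI: "(\<And>x. (f has_real_derivative f' x) (at x)) \<Longrightarrow> deriv f = f'"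
  by (rule ext) (rule DERIV_imp_deriv)

lemma differentiable_upto_const: "differentiable_upto n (\<lambda>x. c)"
proof (induction n arbitrary: c)
  case (Suc n)
  have "deriv (\<lambda>x. c) = (\<lambda>x. 0)"
    by (rule deriv_eqI) auto
  with Suc show ?case by simp
qed simp

lemma differentiable_upto_add:
  "differentiable_upto n f \<Longrightarrow> differentiable_upto n g \<Longrightarrow> differentiable_upto n (\<lambda>x. f x + g x)"
proof (induction n arbitrary: f g)
  case (Suc n)
  have "deriv (\<lambda>x. f x + g x) = (\<lambda>x. deriv f x + deriv g x)"
    using Suc.prems
    by (intro deriv_eqI) (auto intro!: derivative_eq_intros DERIV_deriv_iff_real_differentiable[THEN iffD2])
  with Suc show ?case by auto
qed auto

lemma differentiable_upto_mult:
  "differentiable_upto n f \<Longrightarrow> differentiable_upto n g \<Longrightarrow> differentiable_upto n (\<lambda>x. f x * g x)"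
proof (induction n arbitrary: f g)
  case (Suc n)
  have "deriv (\<lambda>x. f x * g x) = (\<lambda>x. deriv f x * g x + f x * deriv g x)"
    using Suc.prems
    by (intro deriv_eqI) (auto intro!: derivative_eq_intros DERIV_deriv_iff_real_differentiable[THEN iffD2])
  moreover have "differentiable_upto n (\<lambda>x. deriv f x * g x + f x * deriv g x)"
    using Suc differentiable_upto_Suc_imp by (intro differentiable_upto_add Suc.IH) auto
  ultimately show ?case
    using Suc.prems by auto
qed auto

lemma differentiable_upto_inverse:
  "differentiable_upto n f \<Longrightarrow> (\<And>x. f x \<noteq> 0) \<Longrightarrow> differentiable_upto n (\<lambda>x. inverse (f x))"
proof (induction n arbitrary: f)
  case (Suc n)
  have "deriv (\<lambda>x. inverse (f x)) = (\<lambda>x. (-1) * (deriv f x * (inverse (f x) * inverse (f x))))"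
    using Suc.prems
    by (intro deriv_eqI)
      (auto intro!: derivative_eq_intros DERIV_deriv_iff_real_differentiable[THEN iffD2] simp: power2_eq_square)
  moreover have "differentiable_upto n (\<lambda>x. (-1) * (deriv f x * (inverse (f x) * inverse (f x))))"
    using Suc differentiable_upto_Suc_imp
    by (intro differentiable_upto_mult differentiable_upto_const Suc.IH) auto
  moreover have "(\<lambda>x. inverse (f x)) differentiable (at x)" for x
    using Suc.prems by (auto intro!: derivative_intros)
  ultimately show ?case by simp
qed (auto intro!: derivative_intros)

lemma has_real_derivative_affine_comp:
  "f differentiable (at (a * x + b)) \<Longrightarrow>
    ((\<lambda>x. f (a * x + b)) has_real_derivative a * deriv f (a * x + b)) (at x)"
proof -
  assume "f differentiable (at (a * x + b))"
  then have "(f has_real_derivative deriv f (a * x + b)) (at (a * x + b))"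
    by (simp add: DERIV_deriv_iff_real_differentiable)
  moreover have "((\<lambda>x. a * x + b) has_real_derivative a) (at x)"
    by (auto intro!: derivative_eq_intros)
  ultimately show ?thesis
    using DERIV_chain2 by (fastforce simp: mult.commute)
qed

lemma differentiable_upto_affine:
  "differentiable_upto n f \<Longrightarrow> differentiable_upto n (\<lambda>x. f (a * x + b))"
proof (induction n arbitrary: f)
  case 0
  then show ?case
    using has_real_derivative_affine_comp real_differentiable_def by fastforce
next
  case (Suc n)
  have "deriv (\<lambda>x. f (a * x + b)) = (\<lambda>x. a * deriv f (a * x + b))"
    using Suc.prems by (intro deriv_eqI has_real_derivative_affine_comp) auto
  moreover have "differentiable_upto n (\<lambda>x. a * deriv f (a * x + b))"
    using Suc by (intro differentiable_upto_mult differentiable_upto_const Suc.IH) auto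
  ultimately show ?case
    using Suc.prems has_real_derivative_affine_comp real_differentiable_def by fastforce
qed

definition flat_poly_exp :: "real poly \<Rightarrow> real \<Rightarrow> real" where
  "flat_poly_exp p x = (if 0 < x then poly p (inverse x) * exp (- inverse x) else 0)"

text \<open>For \<open>x > 0\<close>, the derivative of \<open>p(1/x) exp(-1/x)\<close> is \<open>q(1/x) exp(-1/x)\<close> with
  \<open>q = X\<^sup>2 (p - p')\<close>, so all derivatives of \<open>exp(-1/x)\<close> stay in this class.\<close>

definition flat_deriv_poly :: "real poly \<Rightarrow> real poly" where
  "flat_deriv_poly p = [:0, 0, 1:] * (p - pderiv p)"

lemma flat_poly_exp_nonpos [simp]: "x \<le> 0 \<Longrightarrow> flat_poly_exp p x = 0"
  by (simp add: flat_poly_exp_def)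

lemma poly_times_exp_minus_tendsto_0: "((\<lambda>z::real. poly q z * exp (- z)) \<longlongrightarrow> 0) at_top"
proof -
  have eq: "poly q z * exp (- z) = (\<Sum>i\<le>degree q. coeff q i * (z ^ i / exp z))" for z
    by (simp add: poly_altdef exp_minus divide_inverse sum_distrib_right mult.assoc)
  have "((\<lambda>z. \<Sum>i\<le>degree q. coeff q i * (z ^ i / exp z)) \<longlongrightarrow> (\<Sum>i\<le>degree q. coeff q i * 0)) at_top"
    by (intro tendsto_sum tendsto_mult tendsto_const tendsto_power_div_exp_0)
  then show ?thesis
    by (simp add: eq)
qed

lemma flat_poly_exp_has_derivative:
  "(flat_poly_exp p has_real_derivative flat_poly_exp (flat_deriv_poly p) x) (at x)"
proof -
  consider "0 < x" | "x < 0" | "x = 0"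
    by linarith
  then show ?thesis
  proof cases
    case 1
    have "((\<lambda>x. poly p (inverse x) * exp (- inverse x)) has_real_derivative
        flat_poly_exp (flat_deriv_poly p) x) (at x)"
      using 1 by (auto intro!: derivative_eq_intros simp: flat_poly_exp_def flat_deriv_poly_def
          field_simps power2_eq_square)
    then show ?thesis
      by (rule has_field_derivative_transform_within_open[of _ _ _ "{0<..}"])
        (use 1 in \<open>auto simp: flat_poly_exp_def\<close>)
  next
    case 2
    have "((\<lambda>x. 0) has_real_derivative flat_poly_exp (flat_deriv_poly p) x) (at x)"
      using 2 by (auto simp: flat_poly_exp_def)
    then show ?thesis
      by (rule has_field_derivative_transform_within_open[of _ _ _ "{..<0}"])
        (use 2 in \<open>auto simp: flat_poly_exp_def\<close>)
  next
    case 3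
    have "((\<lambda>y. flat_poly_exp p y / y) \<longlongrightarrow> 0) (at 0)"
    proof (rule filterlim_split_at_real)
      have "\<forall>\<^sub>F y in at_left 0. flat_poly_exp p y / y = 0"
        using eventually_at_left_real[of "-1" 0] by (auto elim!: eventually_mono)
      then show "((\<lambda>y. flat_poly_exp p y / y) \<longlongrightarrow> 0) (at_left 0)"
        by (rule tendsto_eventually)
      have "((\<lambda>y. poly ([:0, 1:] * p) (inverse y) * exp (- inverse y)) \<longlongrightarrow> 0) (at_right 0)"
        by (rule filterlim_compose[OF poly_times_exp_minus_tendsto_0 filterlim_inverse_at_top_right])
      then show "((\<lambda>y. flat_poly_exp p y / y) \<longlongrightarrow> 0) (at_right 0)"
        by (rule Lim_transform_eventually)
          (use eventually_at_right_real[of 0 1] in \<open>auto simp: flat_poly_exp_def field_simps elim!: eventually_mono\<close>)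
    qed
    then show ?thesis
      using 3 by (simp add: has_field_derivative_iff flat_poly_exp_def)
  qed
qed

lemma differentiable_upto_flat_poly_exp: "differentiable_upto n (flat_poly_exp p)"
proof (induction n arbitrary: p)
  case 0
  then show ?case
    using flat_poly_exp_has_derivative real_differentiable_def by auto
next
  case (Suc n)
  moreover have "deriv (flat_poly_exp p) = flat_poly_exp (flat_deriv_poly p)"
    by (rule deriv_eqI) (rule flat_poly_exp_has_derivative)
  ultimately show ?case
    using flat_poly_exp_has_derivative real_differentiable_def by auto
qed

lemma flat_poly_exp_1_pos: "0 < x \<Longrightarrow> 0 < flat_poly_exp 1 x"
  by (simp add: flat_poly_exp_def)

lemma flat_poly_exp_1_nonneg: "0 \<le> flat_poly_exp 1 x"
  by (simp add: flat_poly_exp_def)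

lemma flat_poly_exp_deriv_1_nonneg: "0 \<le> flat_poly_exp (flat_deriv_poly 1) x"
  by (simp add: flat_poly_exp_def flat_deriv_poly_def)

definition smooth_step :: "real \<Rightarrow> real" where
  "smooth_step x = flat_poly_exp 1 x / (flat_poly_exp 1 x + flat_poly_exp 1 (1 - x))"

definition smooth_step_deriv :: "real \<Rightarrow> real" where
  "smooth_step_deriv x =
     (flat_poly_exp (flat_deriv_poly 1) x * flat_poly_exp 1 (1 - x)
      + flat_poly_exp 1 x * flat_poly_exp (flat_deriv_poly 1) (1 - x))
     / (flat_poly_exp 1 x + flat_poly_exp 1 (1 - x))\<^sup>2"

lemma smooth_step_denominator_pos: "0 < flat_poly_exp 1 x + flat_poly_exp 1 (1 - x)"
  using flat_poly_exp_1_pos[of x] flat_poly_exp_1_pos[of "1 - x"]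
    flat_poly_exp_1_nonneg[of x] flat_poly_exp_1_nonneg[of "1 - x"]
  by (cases "0 < x") auto

lemma smooth_step_has_derivative:
  "(smooth_step has_real_derivative smooth_step_deriv x) (at x within S)"
proof -
  have "((\<lambda>x. flat_poly_exp 1 x / (flat_poly_exp 1 x + flat_poly_exp 1 (1 - x)))
      has_real_derivative smooth_step_deriv x) (at x within S)"
    using smooth_step_denominator_pos[of x]
    by (auto intro!: derivative_eq_intros DERIV_chain2[OF flat_poly_exp_has_derivative]
        simp: smooth_step_deriv_def algebra_simps power2_eq_square)
  then show ?thesis
    by (simp add: smooth_step_def[abs_def])
qed

lemma smooth_step_eq_0: "x \<le> 0 \<Longrightarrow> smooth_step x = 0"
  by (simp add: smooth_step_def)

lemma smooth_step_eq_1: "1 \<le> x \<Longrightarrow> smooth_step x = 1"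
  using flat_poly_exp_1_pos[of x] by (simp add: smooth_step_def)

lemma smooth_step_bounds: "0 \<le> smooth_step x" "smooth_step x \<le> 1"
  using smooth_step_denominator_pos[of x] flat_poly_exp_1_nonneg[of x]
    flat_poly_exp_1_nonneg[of "1 - x"]
  by (simp_all add: smooth_step_def field_simps)

lemma smooth_step_deriv_nonneg: "0 \<le> smooth_step_deriv x"
  using flat_poly_exp_1_nonneg[of x] flat_poly_exp_1_nonneg[of "1 - x"]
    flat_poly_exp_deriv_1_nonneg[of x] flat_poly_exp_deriv_1_nonneg[of "1 - x"]
  by (simp add: smooth_step_deriv_def)

lemma smooth_step_deriv_eq_0: "x \<le> 0 \<or> 1 \<le> x \<Longrightarrow> smooth_step_deriv x = 0"
  by (auto simp: smooth_step_deriv_def)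

lemma differentiable_upto_smooth_step: "differentiable_upto n smooth_step"
proof -
  have "differentiable_upto n (\<lambda>x. flat_poly_exp 1 ((-1) * x + 1))"
    by (intro differentiable_upto_affine differentiable_upto_flat_poly_exp)
  then have "differentiable_upto n (\<lambda>x. flat_poly_exp 1 x * inverse (flat_poly_exp 1 x + flat_poly_exp 1 (1 - x)))"
    using smooth_step_denominator_pos
    by (intro differentiable_upto_mult differentiable_upto_inverse differentiable_upto_add
        differentiable_upto_flat_poly_exp) (auto simp: less_imp_neq[symmetric])
  then show ?thesis
    by (simp add: smooth_step_def[abs_def] divide_inverse)
qed

definition plateau :: "real \<Rightarrow> real \<Rightarrow> real \<Rightarrow> real \<Rightarrow> real" where
  "plateau s t e x = smooth_step ((x - s) / e) * smooth_step ((t - x) / e)"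

definition plateau_deriv :: "real \<Rightarrow> real \<Rightarrow> real \<Rightarrow> real \<Rightarrow> real" where
  "plateau_deriv s t e x =
     smooth_step_deriv ((x - s) / e) / e * smooth_step ((t - x) / e)
     - smooth_step ((x - s) / e) * (smooth_step_deriv ((t - x) / e) / e)"

context
  fixes s t e :: real
  assumes e_pos: "0 < e"
begin

lemma plateau_has_derivative:
  "(plateau s t e has_real_derivative plateau_deriv s t e x) (at x within S)"
proof -
  have "((\<lambda>x. smooth_step ((x - s) / e) * smooth_step ((t - x) / e))
      has_real_derivative plateau_deriv s t e x) (at x within S)"
    using e_pos
    by (auto intro!: derivative_eq_intros DERIV_chain2[OF smooth_step_has_derivative]
        simp: plateau_deriv_def)
  then show ?thesis
    by (simp add: plateau_def[abs_def])
qed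

lemma differentiable_upto_plateau: "differentiable_upto n (plateau s t e)"
proof -
  have "differentiable_upto n (\<lambda>x. smooth_step ((1 / e) * x + - s / e) * smooth_step ((-1 / e) * x + t / e))"
    by (intro differentiable_upto_mult differentiable_upto_affine differentiable_upto_smooth_step)
  moreover have "(\<lambda>x. smooth_step ((1 / e) * x + - s / e) * smooth_step ((-1 / e) * x + t / e)) = plateau s t e"
    using e_pos by (auto simp: plateau_def diff_divide_distrib add_divide_distrib)
  ultimately show ?thesis
    by simp
qed

lemma continuous_on_plateau: "continuous_on A (plateau s t e)"
  using plateau_has_derivative
  by (meson DERIV_continuous continuous_at_imp_continuous_on)

lemma continuous_on_plateau_deriv: "continuous_on A (plateau_deriv s t e)"
proof -
  have "deriv (plateau s t e) = plateau_deriv s t e"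
    by (rule deriv_eqI) (rule plateau_has_derivative)
  then have "plateau_deriv s t e differentiable (at x)" for x
    using differentiable_upto_higher_deriv[OF differentiable_upto_plateau, of 1 1] by simp
  then show ?thesis
    by (simp add: continuous_at_imp_continuous_on differentiable_imp_continuous_within)
qed

lemma plateau_eq_0: "x \<le> s \<or> t \<le> x \<Longrightarrow> plateau s t e x = 0"
  using e_pos by (auto simp: plateau_def smooth_step_eq_0 divide_nonpos_pos)

lemma plateau_eq_1: "s + e \<le> x \<Longrightarrow> x \<le> t - e \<Longrightarrow> plateau s t e x = 1"
  using e_pos by (simp add: plateau_def smooth_step_eq_1)

lemma plateau_bounds: "0 \<le> plateau s t e x" "plateau s t e x \<le> 1"
  using smooth_step_bounds by (auto simp: plateau_def intro: mult_le_one)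

lemma plateau_deriv_eq_0:
  "x \<le> s \<or> (s + e \<le> x \<and> x \<le> t - e) \<or> t \<le> x \<Longrightarrow> plateau_deriv s t e x = 0"
  using e_pos
  by (auto simp: plateau_deriv_def smooth_step_eq_0 smooth_step_deriv_eq_0 divide_nonpos_pos)

lemma plateau_deriv_nonneg: "2 * e \<le> t - s \<Longrightarrow> x \<le> s + e \<Longrightarrow> 0 \<le> plateau_deriv s t e x"
  using e_pos smooth_step_deriv_nonneg[of "(x - s) / e"]
  by (simp add: plateau_deriv_def smooth_step_eq_1 smooth_step_deriv_eq_0)

lemma plateau_deriv_nonpos: "2 * e \<le> t - s \<Longrightarrow> t - e \<le> x \<Longrightarrow> plateau_deriv s t e x \<le> 0"
  using e_pos smooth_step_deriv_nonneg[of "(t - x) / e"]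
  by (simp add: plateau_deriv_def smooth_step_eq_1 smooth_step_deriv_eq_0)

lemma test_fun_plateau:
  assumes "a < s" "t < b"
  shows "test_fun a b (plateau s t e)"
proof -
  have "(deriv ^^ n) (plateau s t e) differentiable_on UNIV" for n
    by (rule differentiable_at_imp_differentiable_on)
      (rule differentiable_upto_higher_deriv[OF differentiable_upto_plateau order_refl])
  moreover have "plateau s t e x = 0" if "x \<notin> {s..t}" for x
    using that by (intro plateau_eq_0) auto
  ultimately show ?thesis
    using assms unfolding test_fun_def by (intro conjI allI exI[of _ "{s..t}"]) auto
qed

end

section \<open>Fundamental theorem of calculus for weak derivatives\<close>

lemma H1_weak_deriv_integrable:
  assumes "H1_weak_deriv a b u g"
  shows "g absolutely_integrable_on {a..b}" "(\<lambda>x. (g x)\<^sup>2) integrable_on {a..b}"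
  using assms absolutely_integrable_on_Icc_iff_Ioo integrable_on_Icc_iff_Ioo
  unfolding H1_weak_deriv_def by blast+

lemma absolutely_integrable_mult_continuous:
  fixes f g :: "real \<Rightarrow> real"
  assumes "g absolutely_integrable_on {a..b}" "continuous_on {a..b} f"
  shows "(\<lambda>x. g x * f x) absolutely_integrable_on {a..b}"
proof -
  have "(\<lambda>x. f x * g x) absolutely_integrable_on {a..b}"
  proof (rule absolutely_integrable_bounded_measurable_product_real)
    show "f \<in> borel_measurable (lebesgue_on {a..b})"
      using assms(2) by (intro continuous_imp_measurable_on_sets_lebesgue) auto
    show "bounded (f ` {a..b})"
      using assms(2) by (intro compact_imp_bounded compact_continuous_image) auto
  qed (use assms in auto)
  then show ?thesis
    by (simp add: mult.commute)
qed

lemma integral_eq_integral_subinterval: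
  fixes f :: "real \<Rightarrow> real"
  assumes "{c..d} \<subseteq> {a..b}" "\<And>x. x \<in> {a..b} \<Longrightarrow> x \<notin> {c..d} \<Longrightarrow> f x = 0"
  shows "integral {a..b} f = integral {c..d} f"
proof -
  have "integral {a..b} f = integral {a..b} (\<lambda>x. if x \<in> {c..d} then f x else 0)"
    using assms(2) by (intro integral_cong) auto
  also have "\<dots> = integral ({c..d} \<inter> {a..b}) f"
    by (rule integral_restrict_Int)
  finally show ?thesis
    using assms(1) by (cases "c \<le> d") auto
qed

lemma integral_split_vanishing_middle:
  fixes f :: "real \<Rightarrow> real"
  assumes "f integrable_on {a..b}" "a \<le> c" "c \<le> d" "d \<le> b"
    and "\<And>x. c \<le> x \<Longrightarrow> x \<le> d \<Longrightarrow> f x = 0"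
  shows "integral {a..b} f = integral {a..c} f + integral {d..b} f"
proof -
  have "integral {a..b} f = integral {a..c} f + integral {c..b} f"
    using assms(1-4) by (intro Henstock_Kurzweil_Integration.integral_combine[symmetric]) auto
  also have "integral {c..b} f = integral {d..b} f"
    using assms(3-5) by (intro integral_eq_integral_subinterval) auto
  finally show ?thesis .
qed

lemma integral_weighted_mean_bound:
  fixes u d :: "real \<Rightarrow> real"
  assumes "continuous_on {a..b} u" "continuous_on {a..b} d"
    and "\<And>x. x \<in> {a..b} \<Longrightarrow> 0 \<le> d x" "integral {a..b} d = 1"
    and "\<And>x. x \<in> {a..b} \<Longrightarrow> \<bar>u x - c\<bar> \<le> \<eta>"
  shows "\<bar>integral {a..b} (\<lambda>x. u x * d x) - c\<bar> \<le> \<eta>"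
proof -
  have d_int: "d integrable_on {a..b}"
    using assms(2) by (rule integrable_continuous_interval)
  have "integral {a..b} (\<lambda>x. u x * d x) - c = integral {a..b} (\<lambda>x. u x * d x - c * d x)"
    using assms(1,2,4) d_int
    by (subst integral_diff) (auto intro!: integrable_continuous_interval continuous_intros)
  also have "norm \<dots> \<le> integral {a..b} (\<lambda>x. \<eta> * d x)"
  proof (rule Henstock_Kurzweil_Integration.integral_norm_bound_integral)
    show "(\<lambda>x. u x * d x - c * d x) integrable_on {a..b}"
      using assms(1,2) by (intro integrable_continuous_interval continuous_intros)
    show "(\<lambda>x. \<eta> * d x) integrable_on {a..b}"
      using assms(2) by (intro integrable_continuous_interval continuous_intros)
    show "norm (u x * d x - c * d x) \<le> \<eta> * d x" if "x \<in> {a..b}" for x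
      using assms(3,5)[OF that]
      by (simp add: left_diff_distrib[symmetric] abs_mult mult_right_mono)
  qed
  also have "\<dots> = \<eta>"
    using assms(4) by simp
  finally show ?thesis
    by simp
qed

lemma integral_plateau_deriv:
  assumes "0 < e" "c \<le> d"
  shows "integral {c..d} (plateau_deriv s t e) = plateau s t e d - plateau s t e c"
  using assms plateau_has_derivative[OF assms(1)]
  by (intro integral_unique fundamental_theorem_of_calculus)
    (auto simp: has_real_derivative_iff_has_vector_derivative[symmetric])

text \<open>Both boundary terms are written as averages of \<open>u\<close> against nonnegative weights of total
  mass one: \<open>plateau_deriv\<close> on \<open>[s, s+e]\<close> and its negative on \<open>[t-e, t]\<close>.\<close>

lemma H1_weak_deriv_plateau:
  assumes uc: "continuous_on {a..b} u" and H: "H1_weak_deriv a b u g"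
    and st: "a < s" "t < b" and e: "0 < e" "2 * e \<le> t - s"
  shows "integral {s..s+e} (\<lambda>x. u x * plateau_deriv s t e x)
           - integral {t-e..t} (\<lambda>x. u x * - plateau_deriv s t e x)
         = - integral {s..t} (\<lambda>x. g x * plateau s t e x)"
proof -
  have "deriv (plateau s t e) = plateau_deriv s t e"
    by (rule deriv_eqI) (rule plateau_has_derivative[OF e(1)])
  moreover have "integral {a<..<b} (\<lambda>x. u x * deriv (plateau s t e) x)
      = - integral {a<..<b} (\<lambda>x. g x * plateau s t e x)"
    using H test_fun_plateau[OF e(1) st] unfolding H1_weak_deriv_def by blast
  ultimately have "integral {a..b} (\<lambda>x. u x * plateau_deriv s t e x)
      = - integral {a..b} (\<lambda>x. g x * plateau s t e x)"
    by (simp add: integral_open_interval_real)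
  moreover have "integral {a..b} (\<lambda>x. u x * plateau_deriv s t e x)
      = integral {s..t} (\<lambda>x. u x * plateau_deriv s t e x)"
    using st e by (intro integral_eq_integral_subinterval) (auto simp: plateau_deriv_eq_0)
  moreover have "integral {s..t} (\<lambda>x. u x * plateau_deriv s t e x)
      = integral {s..s+e} (\<lambda>x. u x * plateau_deriv s t e x)
        + integral {t-e..t} (\<lambda>x. u x * plateau_deriv s t e x)"
  proof (rule integral_split_vanishing_middle)
    show "(\<lambda>x. u x * plateau_deriv s t e x) integrable_on {s..t}"
      using st e
      by (intro integrable_continuous_interval continuous_intros continuous_on_plateau_deriv
          continuous_on_subset[OF uc]) auto
  qed (use e in \<open>auto simp: plateau_deriv_eq_0\<close>)
  moreover have "integral {t-e..t} (\<lambda>x. u x * - plateau_deriv s t e x)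
      = - integral {t-e..t} (\<lambda>x. u x * plateau_deriv s t e x)"
    by (simp add: integral_neg)
  moreover have "integral {a..b} (\<lambda>x. g x * plateau s t e x)
      = integral {s..t} (\<lambda>x. g x * plateau s t e x)"
    using st e by (intro integral_eq_integral_subinterval) (auto simp: plateau_eq_0)
  ultimately show ?thesis
    by linarith
qed

lemma integral_mult_plateau_approx:
  fixes g :: "real \<Rightarrow> real"
  assumes g: "g absolutely_integrable_on {s..t}" and e: "0 < e" "2 * e \<le> t - s"
  shows "\<bar>integral {s..t} (\<lambda>x. g x * plateau s t e x) - integral {s..t} g\<bar>
           \<le> integral {s..s+e} (\<lambda>x. \<bar>g x\<bar>) + integral {t-e..t} (\<lambda>x. \<bar>g x\<bar>)"
proof -
  define k where "k x = g x * (plateau s t e x - 1)" for x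
  have k_int: "k integrable_on {s..t}"
    unfolding k_def using g e
    by (intro set_lebesgue_integral_eq_integral(1) absolutely_integrable_mult_continuous
        continuous_intros continuous_on_plateau)
  have g_int: "g integrable_on {s..t}"
    using g by (rule set_lebesgue_integral_eq_integral(1))
  have abs_k: "norm (integral {c..d} k) \<le> integral {c..d} (\<lambda>x. \<bar>g x\<bar>)"
    if "s \<le> c" "c \<le> d" "d \<le> t" for c d
  proof (rule Henstock_Kurzweil_Integration.integral_norm_bound_integral)
    show "k integrable_on {c..d}"
      using k_int that by (auto intro: integrable_on_subinterval)
    show "(\<lambda>x. \<bar>g x\<bar>) integrable_on {c..d}"
      using g that unfolding absolutely_integrable_on_def
      by (auto intro: integrable_on_subinterval)
    show "norm (k x) \<le> \<bar>g x\<bar>" for x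
      using plateau_bounds[OF e(1), of s t x] by (auto simp: k_def abs_mult intro: mult_left_le)
  qed
  have "integral {s..t} (\<lambda>x. g x * plateau s t e x) - integral {s..t} g = integral {s..t} k"
    using integral_add[OF k_int g_int] by (simp add: k_def algebra_simps)
  also have "\<dots> = integral {s..s+e} k + integral {t-e..t} k"
    using k_int e by (intro integral_split_vanishing_middle) (auto simp: k_def plateau_eq_1)
  finally show ?thesis
    using abs_k[of s "s+e"] abs_k[of "t-e" t] e by (auto simp: real_norm_def)
qed

lemma continuous_on_eventually_close:
  fixes f :: "real \<Rightarrow> real"
  assumes "continuous_on A f" "p \<in> A" "0 < \<eta>"
  shows "\<forall>\<^sub>F e in at_right 0. \<forall>x\<in>A. \<bar>x - p\<bar> \<le> e \<longrightarrow> \<bar>f x - f p\<bar> \<le> \<eta>"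
proof -
  obtain d where d: "0 < d" "\<And>x. x \<in> A \<Longrightarrow> dist x p < d \<Longrightarrow> dist (f x) (f p) < \<eta>"
    using assms unfolding continuous_on_iff by blast
  show ?thesis
    using eventually_at_right_real[OF d(1)]
  proof eventually_elim
    case (elim e)
    then show ?case
      using d(2) by (force simp: dist_real_def)
  qed
qed

lemma H1_weak_deriv_ftc_approx:
  fixes u g :: "real \<Rightarrow> real"
  assumes uc: "continuous_on {a..b} u" and H: "H1_weak_deriv a b u g"
    and st: "a < s" "t < b" and e: "0 < e" "2 * e \<le> t - s"
    and u_s: "\<And>x. x \<in> {s..s+e} \<Longrightarrow> \<bar>u x - u s\<bar> \<le> \<eta>"
    and u_t: "\<And>x. x \<in> {t-e..t} \<Longrightarrow> \<bar>u x - u t\<bar> \<le> \<eta>"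
    and g_s: "integral {s..s+e} (\<lambda>x. \<bar>g x\<bar>) \<le> \<eta>"
    and g_t: "integral {t-e..t} (\<lambda>x. \<bar>g x\<bar>) \<le> \<eta>"
  shows "\<bar>u t - u s - integral {s..t} g\<bar> \<le> 4 * \<eta>"
proof -
  define d where "d = plateau_deriv s t e"
  have d_cont: "continuous_on A d" for A
    unfolding d_def using e(1) by (rule continuous_on_plateau_deriv)
  have "\<bar>integral {s..s+e} (\<lambda>x. u x * d x) - u s\<bar> \<le> \<eta>"
  proof (rule integral_weighted_mean_bound)
    show "continuous_on {s..s+e} u"
      using st e by (auto intro: continuous_on_subset[OF uc])
    show "0 \<le> d x" if "x \<in> {s..s+e}" for x
      using that e unfolding d_def by (intro plateau_deriv_nonneg) auto
    show "integral {s..s+e} d = 1"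
      using e unfolding d_def by (simp add: integral_plateau_deriv plateau_eq_0 plateau_eq_1)
  qed (use d_cont u_s in auto)
  moreover have "\<bar>integral {t-e..t} (\<lambda>x. u x * - d x) - u t\<bar> \<le> \<eta>"
  proof (rule integral_weighted_mean_bound)
    show "continuous_on {t-e..t} u"
      using st e by (auto intro: continuous_on_subset[OF uc])
    show "continuous_on {t-e..t} (\<lambda>x. - d x)"
      by (intro continuous_intros d_cont)
    show "0 \<le> - d x" if "x \<in> {t-e..t}" for x
      using that e unfolding d_def by (simp add: plateau_deriv_nonpos)
    show "integral {t-e..t} (\<lambda>x. - d x) = 1"
      using e unfolding d_def by (simp add: integral_neg integral_plateau_deriv plateau_eq_0 plateau_eq_1)
  qed (use u_t in auto)
  moreover have "g absolutely_integrable_on {s..t}"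
    using H1_weak_deriv_integrable(1)[OF H] st by (auto intro: absolutely_integrable_on_subinterval)
  then have "\<bar>integral {s..t} (\<lambda>x. g x * plateau s t e x) - integral {s..t} g\<bar> \<le> 2 * \<eta>"
    using integral_mult_plateau_approx[OF _ e] g_s g_t by fastforce
  moreover have "integral {s..s+e} (\<lambda>x. u x * d x) - integral {t-e..t} (\<lambda>x. u x * - d x)
      = - integral {s..t} (\<lambda>x. g x * plateau s t e x)"
    unfolding d_def by (rule H1_weak_deriv_plateau[OF uc H st e])
  ultimately show ?thesis
    by (simp only: abs_le_iff) linarith
qed

lemma H1_weak_deriv_ftc_interior:
  fixes u g :: "real \<Rightarrow> real"
  assumes uc: "continuous_on {a..b} u" and H: "H1_weak_deriv a b u g"
    and st: "a < s" "s < t" "t < b"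
  shows "u t - u s = integral {s..t} g"
proof -
  have "g absolutely_integrable_on {s..t}"
    using H1_weak_deriv_integrable(1)[OF H] st by (auto intro: absolutely_integrable_on_subinterval)
  then have abs_g: "(\<lambda>x. \<bar>g x\<bar>) integrable_on {s..t}"
    by (simp add: absolutely_integrable_on_def)
  have bound: "\<bar>u t - u s - integral {s..t} g\<bar> \<le> 4 * \<eta>" if "0 < \<eta>" for \<eta>
  proof -
    have "\<forall>\<^sub>F e in at_right 0. e \<in> {0<..<(t - s) / 2}"
      using st by (intro eventually_at_right_real) simp
    moreover have "\<forall>\<^sub>F e in at_right 0. \<forall>x\<in>{a..b}. \<bar>x - s\<bar> \<le> e \<longrightarrow> \<bar>u x - u s\<bar> \<le> \<eta>"
      using st that by (intro continuous_on_eventually_close[OF uc]) auto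
    moreover have "\<forall>\<^sub>F e in at_right 0. \<forall>x\<in>{a..b}. \<bar>x - t\<bar> \<le> e \<longrightarrow> \<bar>u x - u t\<bar> \<le> \<eta>"
      using st that by (intro continuous_on_eventually_close[OF uc]) auto
    moreover have "\<forall>\<^sub>F e in at_right 0. \<forall>x\<in>{s..t}. \<bar>x - s\<bar> \<le> e \<longrightarrow>
        \<bar>integral {s..x} (\<lambda>y. \<bar>g y\<bar>) - integral {s..s} (\<lambda>y. \<bar>g y\<bar>)\<bar> \<le> \<eta>"
      using st that
      by (intro continuous_on_eventually_close[OF indefinite_integral_continuous_1[OF abs_g]]) auto
    moreover have "\<forall>\<^sub>F e in at_right 0. \<forall>x\<in>{s..t}. \<bar>x - t\<bar> \<le> e \<longrightarrow>
        \<bar>integral {x..t} (\<lambda>y. \<bar>g y\<bar>) - integral {t..t} (\<lambda>y. \<bar>g y\<bar>)\<bar> \<le> \<eta>"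
      using st that
      by (intro continuous_on_eventually_close[OF indefinite_integral_continuous_1'[OF abs_g]]) auto
    ultimately have "\<forall>\<^sub>F e in at_right 0. 0 < (e::real) \<and> \<bar>u t - u s - integral {s..t} g\<bar> \<le> 4 * \<eta>"
    proof eventually_elim
      case (elim e)
      have "integral {s..s+e} (\<lambda>y. \<bar>g y\<bar>) \<le> \<eta>"
        using bspec[OF elim(4), of "s + e"] elim(1) by auto
      moreover have "integral {t-e..t} (\<lambda>y. \<bar>g y\<bar>) \<le> \<eta>"
        using bspec[OF elim(5), of "t - e"] elim(1) by auto
      ultimately show ?case
        using elim(1-3) st by (auto intro!: H1_weak_deriv_ftc_approx[OF uc H])
    qed
    then show ?thesis
      by (auto dest: eventually_happens)
  qed
  have "\<bar>u t - u s - integral {s..t} g\<bar> \<le> 0 + \<epsilon>" if "0 < \<epsilon>" for \<epsilon>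
    using bound[of "\<epsilon> / 4"] that by simp
  then show ?thesis
    using field_le_epsilon[of "\<bar>u t - u s - integral {s..t} g\<bar>" 0] by simp
qed

lemma H1_weak_deriv_ftc:
  fixes u g :: "real \<Rightarrow> real"
  assumes uc: "continuous_on {a..b} u" and H: "H1_weak_deriv a b u g"
    and st: "a \<le> s" "s \<le> t" "t \<le> b"
  shows "u t - u s = integral {s..t} g"
proof (cases "a < b")
  case False
  with st have "s = t"
    by linarith
  then show ?thesis
    by simp
next
  case True
  have g_int: "g integrable_on {a..b}"
    using H1_weak_deriv_integrable(1)[OF H] by (rule set_lebesgue_integral_eq_integral(1))
  define G where "G x = integral {a..x} g" for x
  have G_diff: "integral {x..y} g = G y - G x" if "a \<le> x" "x \<le> y" "y \<le> b" for x y
  proof -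
    have "integral {a..x} g + integral {x..y} g = integral {a..y} g"
      using that by (intro Henstock_Kurzweil_Integration.integral_combine integrable_on_subinterval[OF g_int]) auto
    then show ?thesis
      unfolding G_def by linarith
  qed
  define v where "v x = u x - G x" for x
  have v_cont: "continuous_on (closure {a<..<b}) v"
    unfolding v_def G_def using True uc
    by (auto intro!: continuous_intros indefinite_integral_continuous_1 g_int)
  have v_eq: "v x = v y" if "x \<in> {a<..<b}" "y \<in> {a<..<b}" "x < y" for x y
    using that H1_weak_deriv_ftc_interior[OF uc H, of x y] G_diff[of x y] by (simp add: v_def)
  define c where "c = (a + b) / 2"
  have c: "c \<in> {a<..<b}"
    using True by (simp add: c_def)
  have v_const: "v x = v c" if "x \<in> closure {a<..<b}" for x
  proof (rule continuous_constant_on_closure[OF v_cont _ that])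
    fix y
    assume "y \<in> {a<..<b}"
    with c show "v y = v c"
      by (cases y c rule: linorder_cases) (auto intro: v_eq v_eq[symmetric])
  qed
  moreover have "s \<in> closure {a<..<b}" "t \<in> closure {a<..<b}"
    using True st by auto
  ultimately have "v s = v t"
    by metis
  then show ?thesis
    using G_diff[OF st] by (simp add: v_def)
qed

section \<open>Parameter length and Hausdorff measure of arc-length curves\<close>

lemma subset_Icc_Inf:
  fixes P :: "real set"
  assumes "bdd_below P" "\<And>x y. x \<in> P \<Longrightarrow> y \<in> P \<Longrightarrow> \<bar>x - y\<bar> \<le> E"
  shows "P \<subseteq> {Inf P..Inf P + E}"
proof
  fix x
  assume "x \<in> P"
  moreover have "x - E \<le> Inf P"
    using \<open>x \<in> P\<close> assms(2) by (intro cInf_greatest) force+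
  ultimately show "x \<in> {Inf P..Inf P + E}"
    using assms(1) by (auto intro: cInf_lower)
qed

text \<open>The hypothesis on \<open>P\<close> is what a set of parameters of a closed curve of length \<open>L\<close>
  satisfies when its points are pairwise close along the curve, possibly across the seam at
  \<open>0 = L\<close>.\<close>

lemma two_interval_cover:
  fixes P :: "real set" and E L :: real
  assumes P: "P \<subseteq> {0..L}" and E: "0 \<le> E" "4 * E < L"
    and close: "\<And>x y. x \<in> P \<Longrightarrow> y \<in> P \<Longrightarrow> \<bar>x - y\<bar> \<le> E \<or> L - \<bar>x - y\<bar> \<le> E"
  shows "\<exists>a1 b1 a2 b2. a1 \<le> b1 \<and> a2 \<le> b2 \<and> P \<subseteq> {a1..b1} \<union> {a2..b2} \<and> (b1 - a1) + (b2 - a2) \<le> E"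
proof (cases "\<forall>x\<in>P. \<forall>y\<in>P. \<bar>x - y\<bar> \<le> E")
  case True
  then have "P \<subseteq> {Inf P..Inf P + E}"
    using bdd_below_mono[OF bdd_below_Icc P] by (intro subset_Icc_Inf) auto
  then show ?thesis
    using E by (intro exI[of _ "Inf P"] exI[of _ "Inf P + E"]) auto
next
  case False
  then obtain x1 y1 where x1y1: "x1 \<in> P" "y1 \<in> P" "E < \<bar>x1 - y1\<bar>"
    by (auto simp: not_le)
  define x0 where "x0 = min x1 y1"
  define y0 where "y0 = max x1 y1"
  have xy0: "x0 \<in> P" "y0 \<in> P" "E < y0 - x0"
    using x1y1 by (auto simp: x0_def y0_def min_def max_def abs_if split: if_splits)
  moreover have "\<bar>x0 - y0\<bar> = y0 - x0"
    using xy0 E by auto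
  ultimately have wrap: "L - E \<le> y0 - x0"
    using close[of x0 y0] by auto
  have x0: "x0 \<le> L / 2" and y0: "L / 2 < y0"
    using wrap xy0 P E by auto
  define P1 where "P1 = P \<inter> {..L/2}"
  define P2 where "P2 = P \<inter> {L/2<..}"
  have cross: "p \<le> q - (L - E)" if p: "p \<in> P1" and q: "q \<in> P2" for p q
  proof -
    have p': "p \<in> P" "0 \<le> p" "p \<le> L / 2" and q': "q \<in> P" "L / 2 < q" "q \<le> L"
      using p q P by (auto simp: P1_def P2_def)
    have "\<bar>p - x0\<bar> \<le> E" "\<bar>q - y0\<bar> \<le> E"
      using close[OF p'(1) xy0(1)] close[OF q'(1) xy0(2)] p' q' x0 y0 xy0 P E by auto
    moreover have "\<not> \<bar>p - q\<bar> \<le> E"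
      using calculation wrap E by auto
    ultimately show ?thesis
      using close[OF p'(1) q'(1)] p' q' by auto
  qed
  have bdd: "bdd_below A" "bdd_above A" if "A \<subseteq> P" for A
    using that P by (meson bdd_below_mono bdd_above_mono bdd_below_Icc bdd_above_Icc order_trans)+
  have ne: "x0 \<in> P1" "y0 \<in> P2"
    using xy0 x0 y0 by (auto simp: P1_def P2_def)
  have "Sup P1 \<le> q - (L - E)" if "q \<in> P2" for q
    using ne cross that by (intro cSup_least) auto
  then have gap: "Sup P1 + (L - E) \<le> Inf P2"
    using ne by (intro cInf_greatest) force+
  have cover: "P \<subseteq> {0..Sup P1} \<union> {Inf P2..L}"
  proof
    fix p
    assume "p \<in> P"
    then have "p \<in> P1 \<or> p \<in> P2"
      by (auto simp: P1_def P2_def)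
    then show "p \<in> {0..Sup P1} \<union> {Inf P2..L}"
      using \<open>p \<in> P\<close> P bdd[of P1] bdd[of P2] by (auto simp: P1_def P2_def intro: cSup_upper cInf_lower)
  qed
  have "x0 \<le> Sup P1" "Inf P2 \<le> y0"
    using ne bdd[of P1] bdd[of P2] by (auto simp: P1_def P2_def intro: cSup_upper cInf_lower)
  then have "0 \<le> Sup P1" "Inf P2 \<le> L"
    using xy0 P by auto
  moreover have "(Sup P1 - 0) + (L - Inf P2) \<le> E"
    using gap by linarith
  ultimately show ?thesis
    using cover by blast
qed

lemma emeasure_le_two_interval_cover:
  fixes S :: "real set" and a1 b1 a2 b2 :: "nat \<Rightarrow> real"
  assumes "S \<subseteq> (\<Union>i. {a1 i..b1 i} \<union> {a2 i..b2 i})" "\<And>i. a1 i \<le> b1 i" "\<And>i. a2 i \<le> b2 i"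
  shows "emeasure lborel S \<le> (\<Sum>i. ennreal ((b1 i - a1 i) + (b2 i - a2 i)))"
proof -
  have "emeasure lborel S \<le> emeasure lborel (\<Union>i. {a1 i..b1 i} \<union> {a2 i..b2 i})"
    using assms(1) by (intro emeasure_mono) auto
  also have "\<dots> \<le> (\<Sum>i. emeasure lborel ({a1 i..b1 i} \<union> {a2 i..b2 i}))"
    by (intro emeasure_subadditive_countably) auto
  also have "\<dots> \<le> (\<Sum>i. ennreal ((b1 i - a1 i) + (b2 i - a2 i)))"
  proof (intro suminf_le summableI)
    fix i
    have "emeasure lborel ({a1 i..b1 i} \<union> {a2 i..b2 i})
        \<le> emeasure lborel {a1 i..b1 i} + emeasure lborel {a2 i..b2 i}"
      by (rule emeasure_subadditive) auto
    then show "emeasure lborel ({a1 i..b1 i} \<union> {a2 i..b2 i}) \<le> ennreal ((b1 i - a1 i) + (b2 i - a2 i))"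
      using assms(2,3)[of i] by (simp add: ennreal_plus)
  qed
  finally show ?thesis .
qed

lemma continuous_on_compact_pos_lower_bound:
  fixes f :: "'a::topological_space \<Rightarrow> real"
  assumes "compact K" "continuous_on K f" "\<And>x. x \<in> K \<Longrightarrow> 0 < f x"
  obtains m where "0 < m" "\<And>x. x \<in> K \<Longrightarrow> m \<le> f x"
proof (cases "K = {}")
  case True
  then show ?thesis
    using that[of 1] by simp
next
  case False
  obtain x0 where "x0 \<in> K" "\<And>x. x \<in> K \<Longrightarrow> f x0 \<le> f x"
    using continuous_attains_inf[OF assms(1) False assms(2)] by blast
  then show ?thesis
    using that[of "f x0"] assms(3) by blast
qed

lemma norm_ge_of_scaleR_approx:
  fixes b v :: "'a::real_normed_vector"
  assumes "norm (b - t *\<^sub>R v) \<le> e" "norm v = 1"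
  shows "\<bar>t\<bar> - e \<le> norm b"
  using norm_triangle_sub[of "t *\<^sub>R v" b] assms by (simp add: norm_minus_commute)

locale arclength_curve =
  fixes r r' :: "real \<Rightarrow> 'a::euclidean_space" and L :: real
  assumes L_pos: "0 < L"
    and r_deriv: "\<And>s. s \<in> {0..L} \<Longrightarrow> (r has_vector_derivative r' s) (at s within {0..L})"
    and r'_cont: "continuous_on {0..L} r'"
    and unit_speed: "\<And>s. s \<in> {0..L} \<Longrightarrow> norm (r' s) = 1"
    and simple: "\<And>s1 s2. s1 \<in> {0..L} \<Longrightarrow> s2 \<in> {0..L} \<Longrightarrow> s1 < s2 \<Longrightarrow> r s1 = r s2 \<Longrightarrow> s1 = 0 \<and> s2 = L"
    and closed_tangent: "r 0 = r L \<Longrightarrow> r' 0 = r' L"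
begin

lemma continuous_on_r: "continuous_on {0..L} r"
  using r_deriv has_vector_derivative_continuous continuous_on_eq_continuous_within by blast

lemma uniform_linearization:
  assumes "0 < \<epsilon>"
  obtains \<eta> where "0 < \<eta>"
    "\<And>x y. x \<in> {0..L} \<Longrightarrow> y \<in> {0..L} \<Longrightarrow> \<bar>y - x\<bar> < \<eta> \<Longrightarrow>
       norm (r y - r x - (y - x) *\<^sub>R r' x) \<le> \<epsilon> * \<bar>y - x\<bar>"
proof -
  obtain \<eta> where \<eta>: "0 < \<eta>"
    "\<And>x x'. x \<in> {0..L} \<Longrightarrow> x' \<in> {0..L} \<Longrightarrow> dist x' x < \<eta> \<Longrightarrow> dist (r' x') (r' x) < \<epsilon>"
    using compact_uniformly_continuous[OF r'_cont] assms unfolding uniformly_continuous_on_def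
    by (metis compact_Icc)
  have "norm (r y - r x - (y - x) *\<^sub>R r' x) \<le> \<epsilon> * \<bar>y - x\<bar>"
    if x: "x \<in> {0..L}" and y: "y \<in> {0..L}" and xy: "\<bar>y - x\<bar> < \<eta>" for x y
  proof -
    have seg: "closed_segment x y \<subseteq> {0..L}"
      using x y by (auto simp: closed_segment_eq_real_ivl split: if_splits)
    have "(r has_vector_derivative r' z) (at z within closed_segment x y)" if "z \<in> closed_segment x y" for z
      using has_vector_derivative_within_subset[OF r_deriv seg] that seg by auto
    moreover have "norm (r' z - r' x) \<le> \<epsilon>" if "z \<in> closed_segment x y" for z
    proof -
      have "\<bar>z - x\<bar> \<le> \<bar>y - x\<bar>"
        using that by (auto simp: closed_segment_eq_real_ivl split: if_splits)
      then show ?thesis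
        using \<eta>(2)[of x z] that seg x xy by (force simp: dist_norm)
    qed
    ultimately have "norm (r y - r x - (y - x) *\<^sub>R r' x) \<le> norm (y - x) * \<epsilon>"
      by (intro vector_differentiable_bound_linearization[of "closed_segment x y"]) auto
    then show ?thesis
      by (simp add: mult.commute)
  qed
  with \<eta>(1) show ?thesis
    using that by blast
qed

lemma param_dist_le_chord_local:
  assumes c: "1 < c"
  obtains \<eta> where "0 < \<eta>"
    "\<And>x y. x \<in> {0..L} \<Longrightarrow> y \<in> {0..L} \<Longrightarrow> \<bar>x - y\<bar> < \<eta> \<Longrightarrow> \<bar>x - y\<bar> \<le> c * dist (r x) (r y)"
    "\<And>x y. r 0 = r L \<Longrightarrow> x \<in> {0..L} \<Longrightarrow> y \<in> {0..L} \<Longrightarrow> x < \<eta> \<Longrightarrow> L - y < \<eta> \<Longrightarrow>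
       L - y + x \<le> c * dist (r x) (r y)"
proof -
  define \<epsilon> where "\<epsilon> = 1 - 1 / c"
  have \<epsilon>: "0 < \<epsilon>" "1 - \<epsilon> = 1 / c"
    using c by (auto simp: \<epsilon>_def)
  obtain \<eta> where \<eta>: "0 < \<eta>"
    "\<And>x y. x \<in> {0..L} \<Longrightarrow> y \<in> {0..L} \<Longrightarrow> \<bar>y - x\<bar> < \<eta> \<Longrightarrow>
       norm (r y - r x - (y - x) *\<^sub>R r' x) \<le> \<epsilon> * \<bar>y - x\<bar>"
    using uniform_linearization[OF \<epsilon>(1)] by blast
  have chord: "d \<le> c * norm z"
    if "norm (z - d' *\<^sub>R v) \<le> \<epsilon> * d" "\<bar>d'\<bar> = d" "norm v = 1" for z v d d'
  proof -
    have "d * (1 - \<epsilon>) \<le> norm z"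
      using norm_ge_of_scaleR_approx[OF that(1,3)] that(2) by (simp add: algebra_simps)
    then show ?thesis
      using c \<epsilon>(2) by (simp add: field_simps)
  qed
  show ?thesis
  proof (rule that[OF \<eta>(1)])
    show "\<bar>x - y\<bar> \<le> c * dist (r x) (r y)"
      if "x \<in> {0..L}" "y \<in> {0..L}" "\<bar>x - y\<bar> < \<eta>" for x y
      using chord[OF \<eta>(2)[of x y] _ unit_speed[of x]] that
      by (simp add: dist_norm norm_minus_commute abs_minus_commute)
  next
    fix x y
    assume closed: "r 0 = r L" and xy: "x \<in> {0..L}" "y \<in> {0..L}" "x < \<eta>" "L - y < \<eta>"
    have ends: "0 \<in> {0..L}" "L \<in> {0..L}"
      using L_pos by auto
    have "norm (r y - r x - (y - L - x) *\<^sub>R r' 0)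
        = norm ((r y - r L - (y - L) *\<^sub>R r' L) - (r x - r 0 - x *\<^sub>R r' 0))"
      using closed closed_tangent[OF closed] by (simp add: scaleR_diff_left algebra_simps)
    also have "\<dots> \<le> norm (r y - r L - (y - L) *\<^sub>R r' L) + norm (r x - r 0 - x *\<^sub>R r' 0)"
      by (rule norm_triangle_ineq4)
    also have "\<dots> \<le> \<epsilon> * (L - y + x)"
      using \<eta>(2)[OF ends(2) xy(2)] \<eta>(2)[OF ends(1) xy(1)] xy by (auto simp: algebra_simps)
    finally have "norm (r y - r x - (y - L - x) *\<^sub>R r' 0) \<le> \<epsilon> * (L - y + x)" .
    moreover have "\<bar>y - L - x\<bar> = L - y + x"
      using xy by auto
    ultimately have "L - y + x \<le> c * norm (r y - r x)"
      by (rule chord[OF _ _ unit_speed[OF ends(1)]])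
    then show "L - y + x \<le> c * dist (r x) (r y)"
      by (simp add: dist_norm norm_minus_commute)
  qed
qed

lemma chord_bounded_below:
  assumes \<eta>: "0 < \<eta>"
  obtains m where "0 < m"
    "\<And>x y. x \<in> {0..L} \<Longrightarrow> y \<in> {0..L} \<Longrightarrow> \<eta> \<le> \<bar>x - y\<bar> \<Longrightarrow>
       (r 0 = r L \<Longrightarrow> \<bar>x - y\<bar> \<le> L - \<eta>) \<Longrightarrow> m \<le> dist (r x) (r y)"
proof -
  define K where "K = {p \<in> {0..L} \<times> {0..L}.
    \<eta> \<le> \<bar>fst p - snd p\<bar> \<and> (r 0 = r L \<longrightarrow> \<bar>fst p - snd p\<bar> \<le> L - \<eta>)}"
  have K_compact: "compact K"
  proof -
    have "closed {p :: real \<times> real. r 0 = r L \<longrightarrow> \<bar>fst p - snd p\<bar> \<le> L - \<eta>}"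
    proof (cases "r 0 = r L")
      case True
      then show ?thesis
        by simp (intro closed_Collect_le continuous_intros)
    qed simp
    moreover have "closed {p :: real \<times> real. \<eta> \<le> \<bar>fst p - snd p\<bar>}"
      by (intro closed_Collect_le continuous_intros)
    moreover have "K = ({0..L} \<times> {0..L}) \<inter> ({p. \<eta> \<le> \<bar>fst p - snd p\<bar>}
        \<inter> {p. r 0 = r L \<longrightarrow> \<bar>fst p - snd p\<bar> \<le> L - \<eta>})"
      by (auto simp: K_def)
    ultimately show ?thesis
      by (simp only:) (intro compact_Int_closed compact_Times compact_Icc closed_Int)
  qed
  have K_cont: "continuous_on K (\<lambda>p. dist (r (fst p)) (r (snd p)))"
    by (intro continuous_intros continuous_on_compose2[OF continuous_on_r]) (auto simp: K_def)
  have K_pos: "0 < dist (r (fst p)) (r (snd p))" if "p \<in> K" for p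
  proof -
    have p: "fst p \<in> {0..L}" "snd p \<in> {0..L}" "\<eta> \<le> \<bar>fst p - snd p\<bar>"
      "r 0 = r L \<Longrightarrow> \<bar>fst p - snd p\<bar> \<le> L - \<eta>"
      using that by (auto simp: K_def)
    then consider "fst p < snd p" | "snd p < fst p"
      using \<eta> by linarith
    then show ?thesis
      by cases (use simple[of "fst p" "snd p"] simple[of "snd p" "fst p"] p \<eta> in auto)
  qed
  obtain m where "0 < m" "\<And>p. p \<in> K \<Longrightarrow> m \<le> dist (r (fst p)) (r (snd p))"
    using continuous_on_compact_pos_lower_bound[OF K_compact K_cont K_pos] by blast
  then show ?thesis
    using that by (auto simp: K_def)
qed

lemma param_dist_le_chord:
  assumes c: "1 < c"
  obtains \<delta> where "0 < \<delta>"
    "\<And>x y. x \<in> {0..L} \<Longrightarrow> y \<in> {0..L} \<Longrightarrow> dist (r x) (r y) \<le> \<delta> \<Longrightarrow>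
       \<bar>x - y\<bar> \<le> c * dist (r x) (r y) \<or> L - \<bar>x - y\<bar> \<le> c * dist (r x) (r y)"
proof -
  obtain \<eta> where \<eta>: "0 < \<eta>"
    "\<And>x y. x \<in> {0..L} \<Longrightarrow> y \<in> {0..L} \<Longrightarrow> \<bar>x - y\<bar> < \<eta> \<Longrightarrow> \<bar>x - y\<bar> \<le> c * dist (r x) (r y)"
    "\<And>x y. r 0 = r L \<Longrightarrow> x \<in> {0..L} \<Longrightarrow> y \<in> {0..L} \<Longrightarrow> x < \<eta> \<Longrightarrow> L - y < \<eta> \<Longrightarrow>
       L - y + x \<le> c * dist (r x) (r y)"
    using param_dist_le_chord_local[OF c] by blast
  obtain m where m: "0 < m"
    "\<And>x y. x \<in> {0..L} \<Longrightarrow> y \<in> {0..L} \<Longrightarrow> \<eta> \<le> \<bar>x - y\<bar> \<Longrightarrow>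
       (r 0 = r L \<Longrightarrow> \<bar>x - y\<bar> \<le> L - \<eta>) \<Longrightarrow> m \<le> dist (r x) (r y)"
    using chord_bounded_below[OF \<eta>(1)] by blast
  show ?thesis
  proof (rule that[of "m / 2"])
    fix x y
    assume xy: "x \<in> {0..L}" "y \<in> {0..L}" and small: "dist (r x) (r y) \<le> m / 2"
    then have "\<not> (\<eta> \<le> \<bar>x - y\<bar> \<and> (r 0 = r L \<longrightarrow> \<bar>x - y\<bar> \<le> L - \<eta>))"
      using m by force
    then consider "\<bar>x - y\<bar> < \<eta>" | "r 0 = r L" "L - \<eta> < \<bar>x - y\<bar>"
      by fastforce
    then show "\<bar>x - y\<bar> \<le> c * dist (r x) (r y) \<or> L - \<bar>x - y\<bar> \<le> c * dist (r x) (r y)"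
    proof cases
      case 1
      then show ?thesis
        using \<eta>(2) xy by blast
    next
      case 2
      show ?thesis
      proof (cases "x \<le> y")
        case True
        then show ?thesis
          using \<eta>(3)[OF 2(1) xy] 2(2) xy by auto
      next
        case False
        then show ?thesis
          using \<eta>(3)[OF 2(1) xy(2,1)] 2(2) xy by (auto simp: dist_commute)
      qed
    qed
  qed (use m in simp)
qed

lemma small_preimage_two_interval_cover:
  assumes c: "1 < c"
  obtains \<delta> where "0 < \<delta>"
    "\<And>P D. P \<subseteq> {0..L} \<Longrightarrow> 0 \<le> D \<Longrightarrow> D \<le> \<delta> \<Longrightarrow>
       (\<And>x y. x \<in> P \<Longrightarrow> y \<in> P \<Longrightarrow> dist (r x) (r y) \<le> D) \<Longrightarrow>
       \<exists>a1 b1 a2 b2. a1 \<le> b1 \<and> a2 \<le> b2 \<and> P \<subseteq> {a1..b1} \<union> {a2..b2} \<and> (b1 - a1) + (b2 - a2) \<le> c * D"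
proof -
  obtain \<delta> where \<delta>: "0 < \<delta>"
    "\<And>x y. x \<in> {0..L} \<Longrightarrow> y \<in> {0..L} \<Longrightarrow> dist (r x) (r y) \<le> \<delta> \<Longrightarrow>
       \<bar>x - y\<bar> \<le> c * dist (r x) (r y) \<or> L - \<bar>x - y\<bar> \<le> c * dist (r x) (r y)"
    using param_dist_le_chord[OF c] by blast
  show ?thesis
  proof (rule that[of "min \<delta> (L / (8 * c))"])
    show "0 < min \<delta> (L / (8 * c))"
      using \<delta>(1) L_pos c by simp
    fix P D
    assume P: "P \<subseteq> {0..L}" and D: "0 \<le> D" "D \<le> min \<delta> (L / (8 * c))"
      and diam: "\<And>x y. x \<in> P \<Longrightarrow> y \<in> P \<Longrightarrow> dist (r x) (r y) \<le> D"
    have "c * D \<le> c * (L / (8 * c))"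
      using c D by (intro mult_left_mono) auto
    then have "4 * (c * D) < L"
      using c L_pos by simp
    moreover have "\<bar>x - y\<bar> \<le> c * D \<or> L - \<bar>x - y\<bar> \<le> c * D" if "x \<in> P" "y \<in> P" for x y
    proof -
      have "c * dist (r x) (r y) \<le> c * D"
        using diam[OF that] c by simp
      then show ?thesis
        using \<delta>(2)[of x y] diam[OF that] D P that by force
    qed
    ultimately show "\<exists>a1 b1 a2 b2. a1 \<le> b1 \<and> a2 \<le> b2 \<and> P \<subseteq> {a1..b1} \<union> {a2..b2}
        \<and> (b1 - a1) + (b2 - a2) \<le> c * D"
      using c D by (intro two_interval_cover[OF P]) auto
  qed
qed

lemma measure_div_le_hausdorff1:
  assumes S: "S \<subseteq> {0..L}" and c: "1 < c"
  shows "ennreal (measure lborel S / c) \<le> hausdorff1 (r ` S)"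
proof -
  obtain \<delta> where \<delta>: "0 < \<delta>"
    "\<And>P D. P \<subseteq> {0..L} \<Longrightarrow> 0 \<le> D \<Longrightarrow> D \<le> \<delta> \<Longrightarrow>
       (\<And>x y. x \<in> P \<Longrightarrow> y \<in> P \<Longrightarrow> dist (r x) (r y) \<le> D) \<Longrightarrow>
       \<exists>a1 b1 a2 b2. a1 \<le> b1 \<and> a2 \<le> b2 \<and> P \<subseteq> {a1..b1} \<union> {a2..b2} \<and> (b1 - a1) + (b2 - a2) \<le> c * D"
    using small_preimage_two_interval_cover[OF c] by blast
  have "ennreal (measure lborel S / c) \<le> (\<Sum>i. ennreal (diameter (C i)))"
    if C: "r ` S \<subseteq> (\<Union>i. C i)" "\<forall>i. bounded (C i) \<and> diameter (C i) \<le> \<delta>" for C :: "nat \<Rightarrow> 'a set"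
  proof -
    define P where "P i = {s \<in> {0..L}. r s \<in> C i}" for i
    have "\<exists>a1 b1 a2 b2. a1 \<le> b1 \<and> a2 \<le> b2 \<and> P i \<subseteq> {a1..b1} \<union> {a2..b2}
        \<and> (b1 - a1) + (b2 - a2) \<le> c * diameter (C i)" for i
      using C(2) unfolding P_def by (intro \<delta>(2)) (auto simp: diameter_ge_0 intro: diameter_bounded_bound)
    then obtain a1 b1 a2 b2 where ab: "\<And>i. a1 i \<le> b1 i \<and> a2 i \<le> b2 i
        \<and> P i \<subseteq> {a1 i..b1 i} \<union> {a2 i..b2 i}
        \<and> (b1 i - a1 i) + (b2 i - a2 i) \<le> c * diameter (C i)"
      by metis
    have "S \<subseteq> (\<Union>i. {a1 i..b1 i} \<union> {a2 i..b2 i})"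
      using C(1) S ab unfolding P_def by blast
    then have "emeasure lborel S \<le> (\<Sum>i. ennreal ((b1 i - a1 i) + (b2 i - a2 i)))"
      using ab by (intro emeasure_le_two_interval_cover) auto
    also have "\<dots> \<le> (\<Sum>i. ennreal c * ennreal (diameter (C i)))"
    proof (intro suminf_le summableI)
      fix i
      have "ennreal ((b1 i - a1 i) + (b2 i - a2 i)) \<le> ennreal (c * diameter (C i))"
        using ab[of i] by (intro ennreal_leI) auto
      then show "ennreal ((b1 i - a1 i) + (b2 i - a2 i)) \<le> ennreal c * ennreal (diameter (C i))"
        using c by (simp add: ennreal_mult'[symmetric] del: ennreal_plus)
    qed
    also have "\<dots> = ennreal c * (\<Sum>i. ennreal (diameter (C i)))"
      by simp
    finally have "ennreal (measure lborel S) \<le> ennreal c * (\<Sum>i. ennreal (diameter (C i)))"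
      by (rule order_trans[rotated]) (simp add: measure_def ennreal_enn2real_if)
    then show ?thesis
      using c by (simp add: divide_ennreal[symmetric] divide_le_posI_ennreal)
  qed
  then have "ennreal (measure lborel S / c) \<le> hausdorff1_pre \<delta> (r ` S)"
    unfolding hausdorff1_pre_def by (intro INF_greatest) auto
  also have "\<dots> \<le> hausdorff1 (r ` S)"
    unfolding hausdorff1_def using \<delta>(1) by (intro SUP_upper) auto
  finally show ?thesis .
qed

lemma measure_le_hausdorff1:
  assumes "S \<subseteq> {0..L}"
  shows "ennreal (measure lborel S) \<le> hausdorff1 (r ` S)"
proof (rule tendsto_upperbound)
  show "((\<lambda>c. ennreal (measure lborel S / c)) \<longlongrightarrow> ennreal (measure lborel S)) (at_right 1)"
    by (auto intro!: tendsto_ennrealI tendsto_eq_intros)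
  show "\<forall>\<^sub>F c in at_right 1. ennreal (measure lborel S / c) \<le> hausdorff1 (r ` S)"
    using eventually_at_right_less[of 1]
    by eventually_elim (rule measure_div_le_hausdorff1[OF assms])
qed simp

end

section \<open>A Poincare inequality on the non-extremal level set\<close>

lemma integral_abs_squared_le:
  fixes g :: "'a::euclidean_space \<Rightarrow> real"
  assumes S: "S \<in> lmeasurable" and g: "(\<lambda>x. \<bar>g x\<bar>) integrable_on S"
    and g2: "(\<lambda>x. (g x)\<^sup>2) integrable_on S"
  shows "(integral S (\<lambda>x. \<bar>g x\<bar>))\<^sup>2 \<le> measure lebesgue S * integral S (\<lambda>x. (g x)\<^sup>2)"
proof -
  have nn_integral: "f \<in> borel_measurable lebesgue \<and> (\<integral>\<^sup>+x. ennreal (f x) \<partial>lebesgue) = ennreal (integral S h)"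
    if "h integrable_on S" "\<And>x. f x = indicator S x * h x" "\<And>x. 0 \<le> f x" for f h
  proof -
    have "f = (\<lambda>x. if x \<in> S then h x else 0)"
      using that(2) by (auto simp: indicator_times_eq_if)
    then have "(f has_integral integral S h) UNIV"
      using that(1) by (simp add: has_integral_restrict_UNIV integrable_integral)
    then show ?thesis
      using has_integral_iff_nn_integral_lebesgue[of f] that(3) by blast
  qed
  define F where "F x = indicator S x * \<bar>g x\<bar>" for x :: 'a
  have F: "F \<in> borel_measurable lebesgue" "(\<integral>\<^sup>+x. ennreal (F x) \<partial>lebesgue) = ennreal (integral S (\<lambda>x. \<bar>g x\<bar>))"
    using nn_integral[OF g, of F] by (auto simp: F_def)
  have "(F x)\<^sup>2 = indicator S x * (g x)\<^sup>2" for x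
    by (simp add: F_def indicator_def)
  then have "(\<integral>\<^sup>+x. ennreal ((F x)\<^sup>2) \<partial>lebesgue) = ennreal (integral S (\<lambda>x. (g x)\<^sup>2))"
    using nn_integral[OF g2] by simp
  then have F2: "(\<integral>\<^sup>+x. ennreal (F x) ^ 2 \<partial>lebesgue) = ennreal (integral S (\<lambda>x. (g x)\<^sup>2))"
    by (simp add: F_def ennreal_power)
  have one: "indicat_real S \<in> borel_measurable lebesgue"
    "(\<integral>\<^sup>+x. ennreal (indicator S x) \<partial>lebesgue) = ennreal (measure lebesgue S)"
    using nn_integral[OF integrable_on_const[OF S, of 1], of "indicator S"] lmeasure_integral[OF S]
    by auto
  have "(\<integral>\<^sup>+x. ennreal (F x) * ennreal (indicator S x) \<partial>lebesgue)\<^sup>2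
      \<le> (\<integral>\<^sup>+x. ennreal (F x) ^ 2 \<partial>lebesgue) * (\<integral>\<^sup>+x. ennreal (indicator S x) ^ 2 \<partial>lebesgue)"
    using F(1) one(1) by (intro Cauchy_Schwarz_nn_integral) auto
  also have "(\<lambda>x. ennreal (F x) * ennreal (indicator S x)) = (\<lambda>x. ennreal (F x))"
    by (auto simp: F_def indicator_def)
  also have "(\<lambda>x. ennreal (indicator S x :: real) ^ 2) = (\<lambda>x. ennreal (indicator S x))"
    by (auto simp: indicator_def)
  finally have "ennreal ((integral S (\<lambda>x. \<bar>g x\<bar>))\<^sup>2)
      \<le> ennreal (integral S (\<lambda>x. (g x)\<^sup>2) * measure lebesgue S)"
    using F(2) F2 one(2) integral_nonneg[OF g] integral_nonneg[OF g2]
    by (simp add: ennreal_power ennreal_mult)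
  then show ?thesis
    using integral_nonneg[OF g2] by (simp add: mult.commute)
qed

lemma continuous_on_first_point_le:
  fixes u :: "real \<Rightarrow> real"
  assumes "continuous_on {a..b} u" "a \<le> b" "u b \<le> c"
  obtains p where "p \<in> {a..b}" "u p \<le> c" "\<And>x. a \<le> x \<Longrightarrow> x < p \<Longrightarrow> c < u x"
proof -
  define Z where "Z = {a..b} \<inter> u -` {..c}"
  have "closed Z"
    unfolding Z_def using assms(1) by (intro continuous_closed_preimage) auto
  moreover have "b \<in> Z" "bdd_below Z"
    using assms(2,3) by (auto simp: Z_def bdd_below_def)
  ultimately have "Inf Z \<in> Z"
    by (intro closed_contains_Inf) auto
  moreover have "c < u x" if "a \<le> x" "x < Inf Z" for x
  proof (rule ccontr)
    assume "\<not> c < u x"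
    then have "x \<in> Z"
      using that \<open>Inf Z \<in> Z\<close> by (auto simp: Z_def)
    then show False
      using that cInf_lower[OF _ \<open>bdd_below Z\<close>] by fastforce
  qed
  ultimately show ?thesis
    using that by (auto simp: Z_def)
qed

lemma continuous_on_last_point_ge:
  fixes u :: "real \<Rightarrow> real"
  assumes "continuous_on {a..b} u" "a \<le> b" "c \<le> u a"
  obtains q where "q \<in> {a..b}" "c \<le> u q" "\<And>x. q < x \<Longrightarrow> x \<le> b \<Longrightarrow> u x < c"
proof -
  define Z where "Z = {a..b} \<inter> u -` {c..}"
  have "closed Z"
    unfolding Z_def using assms(1) by (intro continuous_closed_preimage) auto
  moreover have "a \<in> Z" "bdd_above Z"
    using assms(2,3) by (auto simp: Z_def bdd_above_def)
  ultimately have "Sup Z \<in> Z"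
    by (intro closed_contains_Sup) auto
  moreover have "u x < c" if "Sup Z < x" "x \<le> b" for x
  proof (rule ccontr)
    assume "\<not> u x < c"
    then have "x \<in> Z"
      using that \<open>Sup Z \<in> Z\<close> by (auto simp: Z_def)
    then show False
      using that cSup_upper[OF _ \<open>bdd_above Z\<close>] by fastforce
  qed
  ultimately show ?thesis
    using that by (auto simp: Z_def)
qed

lemma interval_above_level_right:
  fixes u :: "real \<Rightarrow> real"
  assumes u: "continuous_on {s..t} u" and st: "s \<le> t" and m: "u t \<le> m" "m < u s"
  obtains a b where "s \<le> a" "a < b" "b \<le> t" "\<And>x. a < x \<Longrightarrow> x < b \<Longrightarrow> m < u x \<and> u x < u s"
    "u s - m \<le> u a - u b"
proof -
  obtain p where p: "p \<in> {s..t}" "u p \<le> m" "\<And>x. s \<le> x \<Longrightarrow> x < p \<Longrightarrow> m < u x"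
    using continuous_on_first_point_le[OF u st m(1)] by blast
  have "continuous_on {s..p} u"
    using u p(1) by (auto intro: continuous_on_subset)
  then obtain q where q: "q \<in> {s..p}" "u s \<le> u q" "\<And>x. q < x \<Longrightarrow> x \<le> p \<Longrightarrow> u x < u s"
    using continuous_on_last_point_ge[of s p u "u s"] p(1) by auto
  have "q < p"
    using p(2) q(1,2) m(2) by (cases "q = p") auto
  show ?thesis
  proof (rule that[of q p])
    show "m < u x \<and> u x < u s" if "q < x" "x < p" for x
      using p(3) q(1,3) that by auto
  qed (use p q \<open>q < p\<close> in auto)
qed

lemma interval_above_level:
  fixes u :: "real \<Rightarrow> real"
  assumes u: "continuous_on {a..b} u" and t0: "t0 \<in> {a..b}" and s: "s \<in> {a..b}" "u t0 < u s"
  obtains \<alpha> \<beta> where "a \<le> \<alpha>" "\<alpha> < \<beta>" "\<beta> \<le> b"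
    "\<And>x. \<alpha> < x \<Longrightarrow> x < \<beta> \<Longrightarrow> u t0 < u x \<and> u x < u s" "u s - u t0 \<le> \<bar>u \<beta> - u \<alpha>\<bar>"
proof (cases "s < t0")
  case True
  have "continuous_on {s..t0} u"
    using s(1) t0 by (auto intro: continuous_on_subset[OF u])
  then obtain \<alpha> \<beta> where "s \<le> \<alpha>" "\<alpha> < \<beta>" "\<beta> \<le> t0"
    "\<And>x. \<alpha> < x \<Longrightarrow> x < \<beta> \<Longrightarrow> u t0 < u x \<and> u x < u s" "u s - u t0 \<le> u \<alpha> - u \<beta>"
    using interval_above_level_right[of s t0 u "u t0"] True s by auto
  then show ?thesis
    using that[of \<alpha> \<beta>] s t0 by force
next
  case False
  then have "t0 < s"
    using s(2) by (cases "s = t0") auto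
  have "continuous_on {-s..-t0} (\<lambda>x. u (- x))"
    using s(1) t0 by (intro continuous_on_compose2[OF u] continuous_intros) auto
  then obtain \<alpha> \<beta> where "- s \<le> \<alpha>" "\<alpha> < \<beta>" "\<beta> \<le> - t0"
    "\<And>x. \<alpha> < x \<Longrightarrow> x < \<beta> \<Longrightarrow> u t0 < u (- x) \<and> u (- x) < u s" "u s - u t0 \<le> u (- \<alpha>) - u (- \<beta>)"
    using interval_above_level_right[of "- s" "- t0" "\<lambda>x. u (- x)" "u t0"] \<open>t0 < s\<close> s by auto
  then show ?thesis
    using that[of "- \<beta>" "- \<alpha>"] s t0 by (force simp: minus_less_iff less_minus_iff)
qed

lemma level_set_in_sets_lborel:
  fixes u :: "real \<Rightarrow> real"
  assumes "continuous_on {a..b} u"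
  shows "{x \<in> {a..b}. m < u x \<and> u x < M} \<in> sets lborel"
proof -
  have "closed ({a..b} \<inter> u -` (- {m<..<M}))"
    using assms by (intro continuous_closed_preimage) auto
  moreover have "{x \<in> {a..b}. m < u x \<and> u x < M} = {a..b} - ({a..b} \<inter> u -` (- {m<..<M}))"
    by auto
  ultimately show ?thesis
    by simp
qed

lemma H1_level_set_oscillation_le:
  fixes u g :: "real \<Rightarrow> real"
  assumes uc: "continuous_on {a..b} u" and H: "H1_weak_deriv a b u g"
    and t0: "t0 \<in> {a..b}" "\<And>x. x \<in> {a..b} \<Longrightarrow> u t0 \<le> u x"
    and s: "s \<in> {a..b}" "u t0 < u s" "u s < M"
  defines "S \<equiv> {x \<in> {a..b}. u t0 < u x \<and> u x < M}"
  shows "u s - u t0 \<le> integral S (\<lambda>x. \<bar>g x\<bar>)"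
proof -
  obtain \<alpha> \<beta> where \<alpha>\<beta>: "a \<le> \<alpha>" "\<alpha> < \<beta>" "\<beta> \<le> b" "{\<alpha><..<\<beta>} \<subseteq> S"
    "u s - u t0 \<le> \<bar>u \<beta> - u \<alpha>\<bar>"
  proof (rule interval_above_level[OF uc t0(1) s(1,2)])
    fix \<alpha> \<beta>
    assume "a \<le> \<alpha>" "\<alpha> < \<beta>" "\<beta> \<le> b" "\<And>x. \<alpha> < x \<Longrightarrow> x < \<beta> \<Longrightarrow> u t0 < u x \<and> u x < u s"
      "u s - u t0 \<le> \<bar>u \<beta> - u \<alpha>\<bar>"
    then show ?thesis
      using that[of \<alpha> \<beta>] s(3) by (force simp: S_def)
  qed
  have g: "g absolutely_integrable_on {a..b}"
    by (rule H1_weak_deriv_integrable(1)[OF H])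
  have g_sub: "g absolutely_integrable_on {\<alpha>..\<beta>}"
    using \<alpha>\<beta> by (intro absolutely_integrable_on_subinterval[OF g]) auto
  have "S \<in> sets lebesgue" "S \<subseteq> {a..b}"
    using level_set_in_sets_lborel[OF uc] by (auto simp: S_def)
  then have g_S: "(\<lambda>x. \<bar>g x\<bar>) integrable_on S"
    using set_integrable_subset[OF g] by (simp add: absolutely_integrable_on_def)
  have "\<bar>u \<beta> - u \<alpha>\<bar> = \<bar>integral {\<alpha>..\<beta>} g\<bar>"
    using H1_weak_deriv_ftc[OF uc H] \<alpha>\<beta> by simp
  also have "\<dots> \<le> integral {\<alpha>..\<beta>} (\<lambda>x. \<bar>g x\<bar>)"
    using g_sub Henstock_Kurzweil_Integration.integral_norm_bound_integral[of g "{\<alpha>..\<beta>}" "\<lambda>x. \<bar>g x\<bar>"]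
    by (simp add: absolutely_integrable_on_def)
  also have "\<dots> = integral {\<alpha><..<\<beta>} (\<lambda>x. \<bar>g x\<bar>)"
    by (simp add: integral_open_interval_real)
  also have "\<dots> \<le> integral S (\<lambda>x. \<bar>g x\<bar>)"
    using \<alpha>\<beta>(4) g_S g_sub
    by (intro integral_subset_le) (auto simp: absolutely_integrable_on_def integrable_on_Icc_iff_Ioo[symmetric])
  finally show ?thesis
    using \<alpha>\<beta>(5) by linarith
qed

lemma H1_level_set_poincare:
  fixes u g :: "real \<Rightarrow> real"
  assumes uc: "continuous_on {a..b} u" and H: "H1_weak_deriv a b u g" and ab: "a \<le> b"
    and w0_def: "w0 = Inf (u ` {a..b})" and w1_def: "w1 = Sup (u ` {a..b})"
    and S_def: "S = {x \<in> {a..b}. w0 < u x \<and> u x < w1}"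
  shows "integral S (\<lambda>x. (u x - w0)\<^sup>2) \<le> (measure lebesgue S)\<^sup>2 * integral S (\<lambda>x. (g x)\<^sup>2)"
proof -
  obtain t0 where t0: "t0 \<in> {a..b}" "\<And>x. x \<in> {a..b} \<Longrightarrow> u t0 \<le> u x"
    using continuous_attains_inf[OF compact_Icc _ uc] ab by auto
  have w0: "w0 = u t0"
    unfolding w0_def using t0 by (intro cInf_eq_minimum) auto
  have S_sets: "S \<in> sets lebesgue" and S_sub: "S \<subseteq> {a..b}"
    using level_set_in_sets_lborel[OF uc] by (auto simp: S_def)
  then have S: "S \<in> lmeasurable"
    by (intro bounded_set_imp_lmeasurable) (auto intro: bounded_subset[of "{a..b}"])
  have g_S: "(\<lambda>x. \<bar>g x\<bar>) integrable_on S" "(\<lambda>x. (g x)\<^sup>2) integrable_on S"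
    using set_integrable_subset[OF H1_weak_deriv_integrable(1)[OF H] S_sets S_sub]
      set_integrable_subset[OF nonnegative_absolutely_integrable_1[OF H1_weak_deriv_integrable(2)[OF H]] S_sets S_sub]
    by (auto simp: absolutely_integrable_on_def)
  define I1 where "I1 = integral S (\<lambda>x. \<bar>g x\<bar>)"
  have osc: "0 \<le> u x - w0 \<and> u x - w0 \<le> I1" if "x \<in> S" for x
    using that H1_level_set_oscillation_le[OF uc H t0, of x w1] unfolding S_def I1_def w0 by auto
  have "(\<lambda>x. (u x - w0)\<^sup>2) absolutely_integrable_on {a..b}"
    by (intro absolutely_integrable_continuous_real continuous_intros uc)
  then have "(\<lambda>x. (u x - w0)\<^sup>2) integrable_on S"
    by (rule set_lebesgue_integral_eq_integral(1)[OF set_integrable_subset[OF _ S_sets S_sub]])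
  then have "integral S (\<lambda>x. (u x - w0)\<^sup>2) \<le> integral S (\<lambda>x. I1\<^sup>2 * 1)"
    using osc integrable_on_const[OF S] by (intro integral_le) (auto intro: power_mono)
  also have "\<dots> = I1\<^sup>2 * measure lebesgue S"
    using integral_mult_right[of S "I1\<^sup>2" "\<lambda>x. 1"] by (simp only: lmeasure_integral[OF S])
  also have "\<dots> \<le> (measure lebesgue S * integral S (\<lambda>x. (g x)\<^sup>2)) * measure lebesgue S"
    unfolding I1_def by (intro mult_right_mono integral_abs_squared_le S g_S) auto
  finally show ?thesis
    by (simp add: power2_eq_square mult_ac)
qed

lemma ennreal_le_square_mult:
  fixes x m y :: real and h :: ennreal
  assumes "x \<le> m\<^sup>2 * y" "0 \<le> m" "ennreal m \<le> h"
  shows "ennreal x \<le> h\<^sup>2 * ennreal y"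
proof (cases "0 \<le> y")
  case True
  have "ennreal x \<le> ennreal (m\<^sup>2 * y)"
    using assms(1) by (rule ennreal_leI)
  also have "\<dots> = (ennreal m)\<^sup>2 * ennreal y"
    using assms(2) True by (simp add: ennreal_mult' ennreal_power)
  also have "\<dots> \<le> h\<^sup>2 * ennreal y"
    using assms(3) by (intro mult_right_mono power_mono) auto
  finally show ?thesis .
next
  case False
  then have "x \<le> 0"
    using assms(1) mult_nonneg_nonpos[of "m\<^sup>2" y] by simp
  then have "ennreal x = 0"
    by (simp add: ennreal_eq_0_iff)
  then show ?thesis
    by simp
qed

theorem corollary2p2:
  fixes r r' :: "real \<Rightarrow> 'a::euclidean_space"
    and L :: real and w :: "'a \<Rightarrow> real" and g :: "real \<Rightarrow> real"
  assumes dim: "DIM('a) \<ge> 2"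
    and L: "0 < L"
    and r_deriv: "\<And>s. s \<in> {0..L} \<Longrightarrow> (r has_vector_derivative r' s) (at s within {0..L})"
    and r'_cont: "continuous_on {0..L} r'"
    and unit: "\<And>s. s \<in> {0..L} \<Longrightarrow> norm (r' s) = 1"
    and simple: "\<And>s1 s2. s1 \<in> {0..L} \<Longrightarrow> s2 \<in> {0..L} \<Longrightarrow> s1 < s2 \<Longrightarrow> r s1 = r s2 \<Longrightarrow> s1 = 0 \<and> s2 = L"
    and closed_tangent: "r 0 = r L \<Longrightarrow> r' 0 = r' L"
    and w_cont: "continuous_on (r ` {0..L}) w"
    and w_H1: "H1_weak_deriv 0 L (w \<circ> r) g"
  shows "let \<Gamma> = r ` {0..L};
             w0 = Inf (w ` \<Gamma>); w1 = Sup (w ` \<Gamma>);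
             \<Gamma>t = {x \<in> \<Gamma>. w0 < w x \<and> w x < w1};
             S = {s \<in> {0..L}. r s \<in> \<Gamma>t}
         in ennreal (integral S (\<lambda>s. (w (r s) - w0)\<^sup>2))
              \<le> (hausdorff1 \<Gamma>t)\<^sup>2 * ennreal (integral S (\<lambda>s. (g s)\<^sup>2))"
proof -
  interpret arclength_curve r r' L
    using L r_deriv r'_cont unit simple closed_tangent by unfold_locales
  define w0 where "w0 = Inf (w ` r ` {0..L})"
  define w1 where "w1 = Sup (w ` r ` {0..L})"
  define \<Gamma>t where "\<Gamma>t = {x \<in> r ` {0..L}. w0 < w x \<and> w x < w1}"
  define S where "S = {s \<in> {0..L}. r s \<in> \<Gamma>t}"
  have wr_cont: "continuous_on {0..L} (w \<circ> r)"
    by (rule continuous_on_compose[OF continuous_on_r w_cont])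
  have S_level: "S = {s \<in> {0..L}. w0 < (w \<circ> r) s \<and> (w \<circ> r) s < w1}"
    by (auto simp: S_def \<Gamma>t_def)
  have "integral S (\<lambda>s. (w (r s) - w0)\<^sup>2) \<le> (measure lebesgue S)\<^sup>2 * integral S (\<lambda>s. (g s)\<^sup>2)"
    using H1_level_set_poincare[OF wr_cont w_H1 _ _ _ S_level] L by (simp add: w0_def w1_def image_comp)
  moreover have "ennreal (measure lebesgue S) \<le> hausdorff1 \<Gamma>t"
  proof -
    have "ennreal (measure lborel S) \<le> hausdorff1 (r ` S)"
      by (rule measure_le_hausdorff1) (auto simp: S_def)
    moreover have "r ` S = \<Gamma>t"
      by (auto simp: S_def \<Gamma>t_def)
    moreover have "S \<in> sets lborel"
      unfolding S_level by (rule level_set_in_sets_lborel[OF wr_cont])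
    ultimately show ?thesis
      by simp
  qed
  ultimately show ?thesis
    unfolding Let_def w0_def[symmetric] w1_def[symmetric] \<Gamma>t_def[symmetric] S_def[symmetric]
    by (intro ennreal_le_square_mult) auto
qed

end
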